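(* As formal power series in $q$ (equivalently for $|q|<1$), $$\frac{1}{(q;q)_{\infty}} + 4\sum_{n=1}^{\infty}\frac{(-1)^nq^{n(n+1)/2}}{(q;q)_{n-1}(1-q^{2n})(q^{n+1};q)_{\infty}}=\sum_{n =0}^{\infty}\frac{(-1)^nq^{n(n+1)/2}(1-q^{n+1})}{(q;q)_n(1+q^{n+1})(q^{n+2};q)_{\infty}}.$$
   Context: $(z;q)_n=\prod_{j=0}^{n-1}(1-zq^j)$ and $(z;q)_\infty=\prod_{j\ge0}(1-zq^j)$. *)

theory Defs
  imports "HOL-Analysis.Analysis"
begin

definition qpoch :: "complex \<Rightarrow> complex \<Rightarrow> nat \<Rightarrow> complex" where
  "qpoch z q n = (\<Prod>j<n. 1 - z * q ^ j)"

definition qpoch_inf :: "complex \<Rightarrow> complex \<Rightarrow> complex" where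
  "qpoch_inf z q = (\<Prod>j. 1 - z * q ^ j)"

end

theory Submission
  imports Defs
begin

text \<open>Write \<open>a\<^sub>n = (-1)\<^sup>n q\<^bsup>n(n+1)/2\<^esup>\<close> and \<open>P = (q;q)\<^sub>\<infinity>\<close>.
  Splitting \<open>P = (q;q)\<^sub>n (q\<^bsup>n+1\<^esup>;q)\<^sub>\<infinity>\<close> turns the \<open>n\<close>-th term on the left into
  \<open>a\<^sub>n / ((1 + q\<^sup>n) P)\<close> and the \<open>n\<close>-th term on the right into
  \<open>a\<^sub>n (1 - x)\<^sup>2 / ((1 + x) P)\<close> with \<open>x = q\<^bsup>n+1\<^esup>\<close>. Since \<open>a\<^sub>n\<^sub>+\<^sub>1 = -x a\<^sub>n\<close> and
  \<open>(1 - x)\<^sup>2 = (1 + x)\<^sup>2 - 4x\<close>, that term equals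
  \<open>(a\<^sub>n - a\<^sub>n\<^sub>+\<^sub>1) / P + 4 a\<^sub>n\<^sub>+\<^sub>1 / ((1 + q\<^bsup>n+1\<^esup>) P)\<close>; the first part telescopes to
  \<open>a\<^sub>0 / P = 1 / P\<close> and the second sums to four times the left-hand series.\<close>

lemma qpoch_Suc: "qpoch z q (Suc n) = qpoch z q n * (1 - z * q ^ n)"
  by (simp add: qpoch_def)

lemma convergent_prod_qpoch_inf:
  fixes q z :: complex
  assumes "norm q < 1"
  shows "convergent_prod (\<lambda>j. 1 - z * q ^ j)"
proof -
  have "summable (\<lambda>j. norm z * norm q ^ j)"
    using assms by (intro summable_mult summable_geometric) auto
  then have "summable (\<lambda>j. norm ((1 - z * q ^ j) - 1))"
    by (simp add: norm_mult norm_power)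
  then show ?thesis
    by (intro abs_convergent_prod_imp_convergent_prod summable_imp_abs_convergent_prod)
qed

lemma qpoch_inf_split:
  fixes q z :: complex
  assumes "norm q < 1"
  shows "qpoch_inf z q = qpoch z q n * qpoch_inf (z * q ^ n) q"
proof -
  have "(\<lambda>j. 1 - z * q ^ j) has_prod (qpoch z q n * (\<Prod>j. 1 - z * q ^ (j + n)))"
    unfolding qpoch_def
    by (rule has_prod_ignore_initial_segment'[OF convergent_prod_qpoch_inf[OF assms]])
  then show ?thesis
    unfolding qpoch_inf_def by (simp add: has_prod_iff power_add mult_ac)
qed

definition signed_qtri :: "complex \<Rightarrow> nat \<Rightarrow> complex" where
  "signed_qtri q n = (-1) ^ n * q ^ (n * (n + 1) div 2)"

lemma signed_qtri_0 [simp]: "signed_qtri q 0 = 1"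
  by (simp add: signed_qtri_def)

lemma signed_qtri_Suc: "signed_qtri q (Suc n) = - (q ^ Suc n) * signed_qtri q n"
proof -
  have "Suc n * (Suc n + 1) div 2 = n * (n + 1) div 2 + Suc n"
    by simp
  then show ?thesis
    by (simp add: signed_qtri_def power_add)
qed

lemma norm_signed_qtri_le:
  assumes "norm q \<le> 1"
  shows "norm (signed_qtri q n) \<le> norm q ^ n"
proof -
  have "n \<le> n * (n + 1) div 2"
    by (cases n) auto
  then show ?thesis
    using assms by (simp add: signed_qtri_def norm_mult norm_power power_decreasing)
qed

lemma summable_norm_signed_qtri:
  assumes "norm q < 1"
  shows "summable (\<lambda>n. norm (signed_qtri q n))"
  using assms norm_signed_qtri_le[of q]
  by (intro summable_comparison_test[OF _ summable_geometric[of "norm q"]]) auto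

lemma signed_qtri_tendsto_zero:
  assumes "norm q < 1"
  shows "signed_qtri q \<longlonglongrightarrow> 0"
  using summable_LIMSEQ_zero[OF summable_norm_signed_qtri[OF assms]]
  by (simp add: tendsto_norm_zero_iff)

lemma norm_one_plus_power_ge:
  fixes q :: "'a::real_normed_div_algebra"
  assumes "norm q \<le> 1"
  shows "1 - norm q \<le> norm (1 + q ^ n)"
proof (cases n)
  case 0
  then have "norm (1 + q ^ n) = 2"
    by simp
  with norm_ge_zero[of q] show ?thesis
    by linarith
next
  case (Suc m)
  have "1 - norm q \<le> 1 - norm q ^ n"
    using assms Suc power_decreasing[of 1 n "norm q"] by simp
  also have "\<dots> \<le> norm (1 + q ^ n)"
    using norm_triangle_ineq2[of 1 "- (q ^ n)"] by (simp add: norm_power)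
  finally show ?thesis .
qed

lemma summable_signed_qtri_div:
  fixes q :: complex
  assumes "norm q < 1"
  shows "summable (\<lambda>n. signed_qtri q n / (1 + q ^ n))"
proof (rule summable_comparison_test)
  show "summable (\<lambda>n. norm (signed_qtri q n) / (1 - norm q))"
    using summable_norm_signed_qtri[OF assms] by (rule summable_divide)
  have "norm (signed_qtri q n / (1 + q ^ n)) \<le> norm (signed_qtri q n) / (1 - norm q)" for n
    unfolding norm_divide using assms norm_one_plus_power_ge[of q n]
    by (auto intro!: divide_left_mono mult_pos_pos)
  then show "\<exists>N. \<forall>n\<ge>N. norm (signed_qtri q n / (1 + q ^ n))
                          \<le> norm (signed_qtri q n) / (1 - norm q)"
    by simp
qed

lemma mult_square_one_minus_div_one_plus:
  fixes a x :: "'a::field"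
  assumes "1 + x \<noteq> 0"
  shows "a * (1 - x) * (1 - x) / (1 + x) = (a - (- x * a)) + 4 * ((- x * a) / (1 + x))"
  using assms by (simp add: field_simps)

lemma lhs_summand_eq:
  fixes q :: complex
  assumes "norm q < 1"
  shows "signed_qtri q (Suc m)
           / (qpoch q q m * (1 - q ^ (2 * Suc m)) * qpoch_inf (q ^ (Suc m + 1)) q)
         = signed_qtri q (Suc m) / (1 + q ^ Suc m) / qpoch_inf q q"
proof -
  have "1 - q ^ (2 * Suc m) = (1 - q ^ Suc m) * (1 + q ^ Suc m)"
    by (simp add: power_mult algebra_simps power2_eq_square flip: power_add)
  moreover have "qpoch_inf q q = qpoch q q m * (1 - q ^ Suc m) * qpoch_inf (q ^ (Suc m + 1)) q"
    using qpoch_inf_split[OF assms, of q "Suc m"] by (simp add: qpoch_Suc)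
  ultimately show ?thesis
    by (simp add: mult_ac)
qed

lemma rhs_summand_eq:
  fixes q :: complex
  assumes "norm q < 1"
  shows "signed_qtri q n * (1 - q ^ (n + 1))
           / (qpoch q q n * (1 + q ^ (n + 1)) * qpoch_inf (q ^ (n + 2)) q)
         = (signed_qtri q n - signed_qtri q (Suc n)) / qpoch_inf q q
           + 4 * (signed_qtri q (Suc n) / (1 + q ^ Suc n) / qpoch_inf q q)"
proof -
  define x where "x = q ^ Suc n"
  define Q where "Q = qpoch q q n * qpoch_inf (q ^ (n + 2)) q"
  have P_split: "qpoch_inf q q = Q * (1 - x)"
    using qpoch_inf_split[OF assms, of q "Suc n"] by (simp add: Q_def x_def qpoch_Suc mult_ac)
  have "norm x < 1"
    unfolding x_def norm_power using assms by (simp add: power_less_one_iff del: power_Suc)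
  then have x: "1 - x \<noteq> 0" "1 + x \<noteq> 0"
    by (auto simp: add_eq_0_iff)
  have "signed_qtri q n * (1 - x) / (Q * (1 + x))
          = signed_qtri q n * (1 - x) * (1 - x) / (1 + x) / (Q * (1 - x))"
    using nonzero_mult_divide_mult_cancel_right[OF x(1), of "signed_qtri q n * (1 - x)" "Q * (1 + x)"]
    by (simp add: mult_ac)
  also have "\<dots> = (signed_qtri q n - signed_qtri q (Suc n)) / qpoch_inf q q
                   + 4 * (signed_qtri q (Suc n) / (1 + x) / qpoch_inf q q)"
    unfolding mult_square_one_minus_div_one_plus[OF x(2)] P_split signed_qtri_Suc x_def[symmetric]
    by (simp add: add_divide_distrib diff_divide_distrib)
  finally show ?thesis
    by (simp add: Q_def x_def mult_ac)
qed

theorem corollary4p1: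
  fixes q :: complex
  assumes "norm q < 1"
  shows "1 / qpoch_inf q q
         + 4 * (\<Sum>m. let n = Suc m in
              (-1) ^ n * q ^ (n * (n + 1) div 2)
              / (qpoch q q (n - 1) * (1 - q ^ (2 * n)) * qpoch_inf (q ^ (n + 1)) q))
       = (\<Sum>n. (-1) ^ n * q ^ (n * (n + 1) div 2) * (1 - q ^ (n + 1))
              / (qpoch q q n * (1 + q ^ (n + 1)) * qpoch_inf (q ^ (n + 2)) q))"
proof -
  define P where "P = qpoch_inf q q"
  define b where "b m = signed_qtri q (Suc m) / (1 + q ^ Suc m) / P" for m
  have "(\<lambda>n. (signed_qtri q n - signed_qtri q (Suc n)) / P) sums (1 / P)"
    using sums_divide[OF telescope_sums'[OF signed_qtri_tendsto_zero[OF assms]]] by simp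
  moreover have "b sums (\<Sum>m. b m)"
    using summable_signed_qtri_div[OF assms] unfolding b_def
    by (intro summable_sums summable_divide) (rule summable_Suc_iff[THEN iffD2])
  ultimately have "(\<lambda>n. (signed_qtri q n - signed_qtri q (Suc n)) / P + 4 * b n)
                     sums (1 / P + 4 * (\<Sum>m. b m))"
    by (intro sums_add sums_mult)
  then show ?thesis
    unfolding Let_def diff_Suc_1 signed_qtri_def[symmetric] lhs_summand_eq[OF assms] rhs_summand_eq[OF assms]
      P_def[symmetric] b_def[symmetric]
    by (rule sums_unique)
qed

end
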